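(* Let $\mathcal{Z}\subset\mathbb{R}^d$ be a convex compact set with $\max_{\mathbf{z},\mathbf{z}'\in\mathcal{Z}}\|\mathbf{z}-\mathbf{z}'\|\le D$, let $F:\mathcal{Z}\to\mathbb{R}^d$ be single-valued, monotone and $L$-Lipschitz continuous, and let $\mathbf{w}_*$ be a solution of $\mathrm{SVI}(F,\mathcal{Z})$. For any $\widehat{\mathbf{z}}\in\mathcal{Z}$ (e.g., the output of any algorithm), define $\bar{\mathbf{z}}=\mathrm{Proj}_{\mathcal{Z}}(\widehat{\mathbf{z}}-\eta F(\widehat{\mathbf{z}}))$ with $\eta=1/(\sqrt2L)$. Then $$\max_{\mathbf{z}\in\mathcal{Z}}F(\bar{\mathbf{z}})^\top(\bar{\mathbf{z}}-\mathbf{z})\le DL(2+\sqrt2)\|\widehat{\mathbf{z}}-\mathbf{w}_*\|.$$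
   Context: $\mathrm{Proj}_{\mathcal{Z}}$ is the Euclidean projection onto $\mathcal{Z}$. $F$ is monotone if $\langle F(\mathbf{z})-F(\mathbf{z}'),\mathbf{z}-\mathbf{z}'\rangle\ge0$ for all $\mathbf{z},\mathbf{z}'\in\mathcal{Z}$. $\mathrm{SVI}(F,\mathcal{Z})$ asks for $\mathbf{w}_*\in\mathcal{Z}$ with $\langle F(\mathbf{w}_* ),\mathbf{z}-\mathbf{w}_*\rangle\ge0$ for all $\mathbf{z}\in\mathcal{Z}$. *)

theory Defs
  imports "HOL-Analysis.Analysis"
begin

definition monotone_op :: "'a::real_inner set \<Rightarrow> ('a \<Rightarrow> 'a) \<Rightarrow> bool" where
  "monotone_op Z F \<longleftrightarrow> (\<forall>z\<in>Z. \<forall>z'\<in>Z. (F z - F z') \<bullet> (z - z') \<ge> 0)"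

definition svi_solution :: "('a::real_inner \<Rightarrow> 'a) \<Rightarrow> 'a set \<Rightarrow> 'a \<Rightarrow> bool" where
  "svi_solution F Z w \<longleftrightarrow> w \<in> Z \<and> (\<forall>z\<in>Z. F w \<bullet> (z - w) \<ge> 0)"

end

theory Submission
  imports Defs
begin

text \<open>
  Write \<open>z\<^sub>1 = Proj(z\<^sub>0 - \<eta> F z\<^sub>0)\<close>. The variational characterisation of the projection,
  tested at \<open>z\<close>, gives \<open>\<eta> F(z\<^sub>0) \<bullet> (z\<^sub>1 - z) \<le> (z\<^sub>0 - z\<^sub>1) \<bullet> (z\<^sub>1 - z)\<close>; adding the Lipschitz
  error \<open>F(z\<^sub>1) - F(z\<^sub>0)\<close> bounds the gap at \<open>z\<^sub>1\<close> by \<open>(L + 1/\<eta>) \<parallel>z\<^sub>0 - z\<^sub>1\<parallel> D\<close>.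
  Tested at a solution \<open>w\<close> of the variational inequality instead, the same characterisation
  shows that the step moves at most \<open>\<parallel>z\<^sub>0 - z\<^sub>1\<parallel>\<^sup>2 \<le> (1 + (\<eta> L)\<^sup>2) \<parallel>z\<^sub>0 - w\<parallel>\<^sup>2\<close>.
  For \<open>\<eta> = 1/(\<surd>2 L)\<close> the two bounds combine to \<open>(1 + \<surd>2) L D \<surd>2 \<parallel>z\<^sub>0 - w\<parallel>\<close>.
\<close>

definition proj_step :: "'a::{real_inner,heine_borel} set \<Rightarrow> ('a \<Rightarrow> 'a) \<Rightarrow> real \<Rightarrow> 'a \<Rightarrow> 'a" where
  "proj_step Z F \<eta> z = closest_point Z (z - \<eta> *\<^sub>R F z)"

lemma proj_step_in_set:
  assumes "closed Z" "Z \<noteq> {}"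
  shows "proj_step Z F \<eta> z \<in> Z"
  unfolding proj_step_def using closest_point_in_set[OF assms] .

lemma proj_step_inner_le:
  assumes "convex Z" "closed Z" "x \<in> Z"
  shows "(z - proj_step Z F \<eta> z) \<bullet> (x - proj_step Z F \<eta> z) \<le> \<eta> *\<^sub>R F z \<bullet> (x - proj_step Z F \<eta> z)"
proof -
  have "(z - \<eta> *\<^sub>R F z - proj_step Z F \<eta> z) \<bullet> (x - proj_step Z F \<eta> z) \<le> 0"
    unfolding proj_step_def using closest_point_dot[OF assms] .
  then show ?thesis by (simp add: inner_diff_left)
qed

lemma proj_step_gap_le:
  fixes Z :: "'a::{real_inner,heine_borel} set"
  assumes "convex Z" "closed Z" "L-lipschitz_on Z F" "\<eta> > 0" "z\<^sub>0 \<in> Z" "z \<in> Z"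
  defines "z\<^sub>1 \<equiv> proj_step Z F \<eta> z\<^sub>0"
  shows "F z\<^sub>1 \<bullet> (z\<^sub>1 - z) \<le> (L + 1 / \<eta>) * norm (z\<^sub>0 - z\<^sub>1) * norm (z\<^sub>1 - z)"
proof -
  have z\<^sub>1: "z\<^sub>1 \<in> Z"
    unfolding z\<^sub>1_def using proj_step_in_set assms(2,5) by blast
  have "(F z\<^sub>1 - F z\<^sub>0) \<bullet> (z\<^sub>1 - z) \<le> norm (F z\<^sub>1 - F z\<^sub>0) * norm (z\<^sub>1 - z)"
    by (rule norm_cauchy_schwarz)
  also have "\<dots> \<le> L * norm (z\<^sub>0 - z\<^sub>1) * norm (z\<^sub>1 - z)"
    using lipschitz_onD[OF assms(3) z\<^sub>1 assms(5)]
    by (simp add: dist_norm norm_minus_commute mult_right_mono)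
  finally have lipschitz_part: "(F z\<^sub>1 - F z\<^sub>0) \<bullet> (z\<^sub>1 - z) \<le> L * norm (z\<^sub>0 - z\<^sub>1) * norm (z\<^sub>1 - z)" .
  have "\<eta> * (F z\<^sub>0 \<bullet> (z\<^sub>1 - z)) \<le> (z\<^sub>0 - z\<^sub>1) \<bullet> (z\<^sub>1 - z)"
    using proj_step_inner_le[OF assms(1,2,6), where F = F and \<eta> = \<eta> and z = z\<^sub>0]
    by (simp add: z\<^sub>1_def inner_diff_right right_diff_distrib)
  also have "\<dots> \<le> norm (z\<^sub>0 - z\<^sub>1) * norm (z\<^sub>1 - z)"
    by (rule norm_cauchy_schwarz)
  finally have step_part: "F z\<^sub>0 \<bullet> (z\<^sub>1 - z) \<le> 1 / \<eta> * norm (z\<^sub>0 - z\<^sub>1) * norm (z\<^sub>1 - z)"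
    using assms(4) by (simp add: field_simps)
  have "F z\<^sub>1 \<bullet> (z\<^sub>1 - z) = (F z\<^sub>1 - F z\<^sub>0) \<bullet> (z\<^sub>1 - z) + F z\<^sub>0 \<bullet> (z\<^sub>1 - z)"
    by (simp add: inner_diff_left)
  also have "\<dots> \<le> (L + 1 / \<eta>) * norm (z\<^sub>0 - z\<^sub>1) * norm (z\<^sub>1 - z)"
    using lipschitz_part step_part by (simp add: distrib_right)
  finally show ?thesis .
qed

lemma proj_step_dist_svi_solution_le:
  fixes Z :: "'a::{real_inner,heine_borel} set"
  assumes "convex Z" "closed Z" "L-lipschitz_on Z F" "\<eta> > 0" "z\<^sub>0 \<in> Z"
    and "svi_solution F Z w"
  defines "z\<^sub>1 \<equiv> proj_step Z F \<eta> z\<^sub>0"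
  shows "norm (z\<^sub>0 - z\<^sub>1) ^ 2 \<le> (1 + (\<eta> * L) ^ 2) * norm (z\<^sub>0 - w) ^ 2"
proof -
  define a where "a = z\<^sub>0 - z\<^sub>1"
  define b where "b = z\<^sub>0 - w"
  define g where "g = \<eta> *\<^sub>R (F z\<^sub>0 - F w)"
  have w: "w \<in> Z" using assms(6) unfolding svi_solution_def by blast
  have z\<^sub>1: "z\<^sub>1 \<in> Z"
    unfolding z\<^sub>1_def using proj_step_in_set assms(2,5) by blast
  have "norm g = \<eta> * norm (F z\<^sub>0 - F w)"
    unfolding g_def using assms(4) by simp
  also have "\<dots> \<le> \<eta> * L * norm b"
    using lipschitz_onD[OF assms(3,5) w] assms(4) by (simp add: b_def dist_norm)
  finally have "norm g ^ 2 \<le> (\<eta> * L) ^ 2 * norm b ^ 2"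
    by (metis norm_ge_zero power_mono power_mult_distrib)
  have "a \<bullet> (a - b) \<le> \<eta> *\<^sub>R F z\<^sub>0 \<bullet> (a - b)"
    using proj_step_inner_le[OF assms(1,2) w, where F = F and \<eta> = \<eta> and z = z\<^sub>0]
    by (simp add: a_def b_def z\<^sub>1_def)
  moreover have "\<eta> * (F w \<bullet> (a - b)) \<le> 0"
    using assms(4,6) z\<^sub>1 unfolding svi_solution_def a_def b_def
    by (simp add: mult_nonneg_nonpos inner_diff_right)
  ultimately have "a \<bullet> (a - b) \<le> g \<bullet> (a - b)"
    by (simp add: g_def inner_diff_left algebra_simps)
  \<comment> \<open>\<open>2 a \<bullet> (a - b) - \<parallel>a - b\<parallel>\<^sup>2 = \<parallel>a\<parallel>\<^sup>2 - \<parallel>b\<parallel>\<^sup>2\<close> and \<open>2 g \<bullet> (a - b) - \<parallel>a - b\<parallel>\<^sup>2 \<le> \<parallel>g\<parallel>\<^sup>2\<close>\<close>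
  moreover have "0 \<le> norm (g - (a - b)) ^ 2" by simp
  ultimately have "norm a ^ 2 \<le> norm b ^ 2 + norm g ^ 2"
    by (simp add: power2_norm_eq_inner inner_diff_left inner_diff_right inner_commute)
  with \<open>norm g ^ 2 \<le> (\<eta> * L) ^ 2 * norm b ^ 2\<close> show ?thesis
    by (simp add: a_def b_def algebra_simps)
qed

theorem lemma10:
  fixes Z :: "(real ^ 'd) set" and F :: "real ^ 'd \<Rightarrow> real ^ 'd"
    and D L :: real and w zhat :: "real ^ 'd"
  assumes "convex Z" and "compact Z"
    and "\<forall>z\<in>Z. \<forall>z'\<in>Z. norm (z - z') \<le> D"
    and "monotone_op Z F"
    and "L > 0" and "L-lipschitz_on Z F"
    and "svi_solution F Z w"
    and "zhat \<in> Z"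
  shows "let \<eta> = 1 / (sqrt 2 * L);
             zbar = closest_point Z (zhat - \<eta> *\<^sub>R F zhat)
         in \<forall>z\<in>Z. F zbar \<bullet> (zbar - z) \<le> D * L * (2 + sqrt 2) * norm (zhat - w)"
proof -
  define \<eta> where "\<eta> = 1 / (sqrt 2 * L)"
  define zbar where "zbar = proj_step Z F \<eta> zhat"
  have Z_closed: "closed Z" using assms(2) compact_imp_closed by blast
  have \<eta>: "\<eta> > 0" "\<eta> * L = 1 / sqrt 2" "1 / \<eta> = sqrt 2 * L"
    unfolding \<eta>_def using assms(5) by auto
  have "norm (zhat - zbar) ^ 2 \<le> (1 + (\<eta> * L) ^ 2) * norm (zhat - w) ^ 2"
    unfolding zbar_def
    using proj_step_dist_svi_solution_le[OF assms(1) Z_closed assms(6) \<eta>(1) assms(8,7)] .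
  also have "\<dots> \<le> (sqrt 2 * norm (zhat - w)) ^ 2"
    using \<eta>(2) by (simp add: power_divide power_mult_distrib mult_right_mono)
  finally have "norm (zhat - zbar) ^ 2 \<le> (sqrt 2 * norm (zhat - w)) ^ 2" .
  then have dist: "norm (zhat - zbar) \<le> sqrt 2 * norm (zhat - w)"
    by (simp add: power2_le_iff_abs_le)
  have "F zbar \<bullet> (zbar - z) \<le> D * L * (2 + sqrt 2) * norm (zhat - w)" if "z \<in> Z" for z
  proof -
    have diam: "norm (zbar - z) \<le> D"
      using assms(3) proj_step_in_set[OF Z_closed] assms(8) that by (auto simp: zbar_def)
    have "F zbar \<bullet> (zbar - z) \<le> (1 + sqrt 2) * L * norm (zhat - zbar) * norm (zbar - z)"
      using proj_step_gap_le[OF assms(1) Z_closed assms(6) \<eta>(1) assms(8) that] \<eta>(3)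
      by (simp add: zbar_def algebra_simps)
    also have "\<dots> \<le> (1 + sqrt 2) * L * (sqrt 2 * norm (zhat - w)) * D"
      using dist diam assms(5) by (intro mult_mono mult_left_mono) auto
    also have "\<dots> = D * L * (2 + sqrt 2) * norm (zhat - w)"
      by (simp add: algebra_simps)
    finally show ?thesis .
  qed
  then show ?thesis
    by (simp add: Let_def zbar_def \<eta>_def proj_step_def)
qed

end
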